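(* Let $K\in\mathbb N$ and let $d_2,\dots,d_{K+1}$ be real numbers. Suppose there exist constants $a,b,c>0$ such that $$d_{k+1}\le\frac ak+b(1+\log k)+c\sum_{\ell=2}^k\frac{d_\ell}{k-\ell+2}\quad\text{for all }k\in[K].$$ Then $$d_{k+1}\le\left(\frac ak+b(1+\log k)\right)\sum_{i=0}^{k-1}\big(2c(1+\log k)\big)^i\quad\text{for all }k\in[K].$$
   Context: $\log$ is the natural logarithm; $[K]=\{1,\dots,K\}$; an empty sum equals $0$. *)

theory Defs
  imports Complex_Main
begin

end

theory Submission
  imports Defs "HOL-Analysis.Harmonic_Numbers"
begin

text \<open>
  Write \<open>L k = 1 + ln k\<close> and \<open>F k = a/k + b L k\<close>. By strong induction, every earlier term obeys
  \<open>d l \<le> F (l - 1) \<cdot> \<Sum>i<k-1. (2 c L k)^i\<close>, so the convolution in the hypothesis is controlled by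
  \<open>\<Sum>l=2..k. F (l - 1) / (k - l + 2)\<close>. Partial fractions,
  \<open>1/((l - 1)(k - l + 2)) = (1/(l - 1) + 1/(k - l + 2))/(k + 1)\<close>, reduce this to two harmonic sums,
  each at most \<open>L k\<close>; hence it is at most \<open>2 L k F k\<close>, and the geometric sum gains one more term.
\<close>

lemma harm_le_one_plus_ln: "n \<ge> 1 \<Longrightarrow> (harm n :: real) \<le> 1 + ln (real n)"
  using euler_mascheroni_sequence_decreasing[of 1 n] by (simp add: harm_def)

lemma sum_inverse_reflected_eq_harm:
  assumes "k \<ge> 1"
  shows "(\<Sum>l=2..k. 1 / (real k - real l + 2)) = harm k - 1"
proof -
  have "(\<Sum>l=2..k. 1 / (real k - real l + 2)) = (\<Sum>m=2..k. 1 / real m)"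
    by (rule sum.reindex_bij_witness[of _ "\<lambda>m. k + 2 - m" "\<lambda>l. k + 2 - l"])
       (auto simp: of_nat_diff)
  also have "\<dots> = harm k - 1"
    using assms by (simp add: harm_def sum.atLeast_Suc_atMost field_simps numeral_2_eq_2)
  finally show ?thesis .
qed

lemma sum_inverse_shifted_eq_harm: "(\<Sum>l=2..k. 1 / (real l - 1)) = harm (k - 1)"
  unfolding harm_def
  by (rule sum.reindex_bij_witness[of _ "\<lambda>m. m + 1" "\<lambda>l. l - 1"])
     (auto simp: of_nat_diff divide_inverse)

lemma inverse_mult_partial_fractions:
  fixes u v :: "'a :: field"
  assumes "u \<noteq> 0" "v \<noteq> 0" "u + v \<noteq> 0"
  shows "1 / (u * v) = (1 / u + 1 / v) / (u + v)"
proof -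
  have "1 / u + 1 / v = (u + v) / (u * v)"
    using assms by (simp add: field_simps)
  then show ?thesis
    using assms by simp
qed

lemma sum_powers_mono:
  fixes x y :: "'a :: linordered_semidom"
  assumes "0 \<le> x" "x \<le> y" "m \<le> n"
  shows "(\<Sum>i<m. x ^ i) \<le> (\<Sum>i<n. y ^ i)"
proof -
  have "(\<Sum>i<m. x ^ i) \<le> (\<Sum>i<m. y ^ i)"
    using assms by (intro sum_mono power_mono) auto
  also have "\<dots> \<le> (\<Sum>i<n. y ^ i)"
    using assms by (intro sum_mono2) auto
  finally show ?thesis .
qed

lemma sum_atLeast0_atMost_powers: "(\<Sum>i=0..n. (x :: 'a :: comm_semiring_1) ^ i) = 1 + x * (\<Sum>i<n. x ^ i)"
  by (induction n) (auto simp: algebra_simps)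

lemma harmonic_convolution_le:
  fixes a b :: real
  assumes "a \<ge> 0" "b \<ge> 0" "k \<ge> 1"
  shows "(\<Sum>l=2..k. (a / real (l - 1) + b * (1 + ln (real (l - 1)))) / (real k - real l + 2))
           \<le> 2 * (1 + ln (real k)) * (a / real k + b * (1 + ln (real k)))"
    (is "(\<Sum>l=2..k. ?F l / ?D l) \<le> 2 * ?L * _")
proof -
  have harm_k: "harm k \<le> ?L"
    using harm_le_one_plus_ln[OF assms(3)] .
  have harm_pred: "harm (k - 1) \<le> ?L"
    using harm_mono[of "k - 1" k, where 'a = real] harm_k by linarith
  have harm_ge_1: "harm k \<ge> (1 :: real)"
    using harm_mono[of 1 k, where 'a = real] assms(3) by (simp add: harm_def)
  have ln_nonneg: "ln (real k) \<ge> 0"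
    using assms(3) by simp
  have term_le: "?F l / ?D l \<le> a / (real k + 1) * (1 / (real l - 1) + 1 / ?D l) + b * ?L * (1 / ?D l)"
    if l: "l \<in> {2..k}" for l
  proof -
    have pos: "real l - 1 > 0" "?D l > 0"
      using l by auto
    have "a / (real l - 1) / ?D l = a * (1 / ((real l - 1) * ?D l))"
      by simp
    also have "\<dots> = a * ((1 / (real l - 1) + 1 / ?D l) / ((real l - 1) + ?D l))"
      using pos by (subst inverse_mult_partial_fractions) auto
    also have "\<dots> = a / (real k + 1) * (1 / (real l - 1) + 1 / ?D l)"
      by simp
    finally have "a / (real l - 1) / ?D l = a / (real k + 1) * (1 / (real l - 1) + 1 / ?D l)" .
    moreover have "b * (1 + ln (real l - 1)) / ?D l \<le> b * ?L * (1 / ?D l)"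
      using l pos assms(2) by (simp add: divide_right_mono mult_left_mono)
    ultimately show ?thesis
      using l by (simp add: of_nat_diff add_divide_distrib)
  qed
  have "(\<Sum>l=2..k. ?F l / ?D l)
        \<le> (\<Sum>l=2..k. a / (real k + 1) * (1 / (real l - 1) + 1 / ?D l) + b * ?L * (1 / ?D l))"
    by (rule sum_mono) (rule term_le)
  also have "\<dots> = a / (real k + 1) * (harm (k - 1) + (harm k - 1)) + b * ?L * (harm k - 1)"
    by (simp only: sum.distrib sum_inverse_shifted_eq_harm sum_inverse_reflected_eq_harm[OF assms(3)]
          flip: sum_distrib_left)
  also have "\<dots> \<le> a / real k * (2 * ?L) + b * ?L * (2 * ?L)"
  proof (intro add_mono mult_mono)
    show "a / (real k + 1) \<le> a / real k"
      using assms by (intro divide_left_mono) auto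
  qed (use assms harm_k harm_pred harm_ge_1 ln_nonneg harm_nonneg[of "k - 1", where 'a = real] in auto)
  finally show ?thesis
    by (simp add: algebra_simps)
qed

lemma convolution_recursion_geometric_bound:
  fixes d F x :: "nat \<Rightarrow> real" and c :: real
  assumes recursion: "\<And>k. k \<in> {1..K} \<Longrightarrow> d (k + 1) \<le> F k + c * (\<Sum>l=2..k. d l / (real k - real l + 2))"
    and "c \<ge> 0"
    and F_nonneg: "\<And>k. k \<ge> 1 \<Longrightarrow> F k \<ge> 0"
    and x_nonneg: "\<And>k. k \<ge> 1 \<Longrightarrow> x k \<ge> 0"
    and x_mono: "\<And>j k. 1 \<le> j \<Longrightarrow> j \<le> k \<Longrightarrow> x j \<le> x k"
    and convolution: "\<And>k. k \<ge> 1 \<Longrightarrow> c * (\<Sum>l=2..k. F (l - 1) / (real k - real l + 2)) \<le> x k * F k"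
  shows "k \<in> {1..K} \<Longrightarrow> d (k + 1) \<le> F k * (\<Sum>i=0..k - 1. x k ^ i)"
proof (induction k rule: less_induct)
  case (less k)
  define D where "D l = real k - real l + 2" for l
  define T where "T = (\<Sum>i<k - 1. x k ^ i)"
  have T_nonneg: "T \<ge> 0"
    unfolding T_def using x_nonneg less.prems by (intro sum_nonneg) auto
  have earlier: "d l / D l \<le> T * (F (l - 1) / D l)" if l: "l \<in> {2..k}" for l
  proof -
    have "d l \<le> F (l - 1) * (\<Sum>i=0..l - 1 - 1. x (l - 1) ^ i)"
      using less.IH[of "l - 1"] l less.prems by auto
    also have "\<dots> \<le> F (l - 1) * T"
      unfolding T_def atLeast0AtMost lessThan_Suc_atMost[symmetric]
      using l x_nonneg[of "l - 1"] x_mono[of "l - 1" k] F_nonneg[of "l - 1"]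
      by (intro mult_left_mono sum_powers_mono) auto
    finally have "d l \<le> F (l - 1) * T" .
    then show ?thesis
      using l by (simp add: D_def divide_right_mono mult.commute)
  qed
  have "d (k + 1) \<le> F k + c * (\<Sum>l=2..k. d l / D l)"
    using recursion less.prems unfolding D_def by blast
  also have "\<dots> \<le> F k + c * (T * (\<Sum>l=2..k. F (l - 1) / D l))"
  proof -
    have "(\<Sum>l=2..k. d l / D l) \<le> T * (\<Sum>l=2..k. F (l - 1) / D l)"
      unfolding sum_distrib_left by (rule sum_mono) (rule earlier)
    then show ?thesis
      using \<open>c \<ge> 0\<close> by (intro add_left_mono mult_left_mono)
  qed
  also have "\<dots> \<le> F k + T * (x k * F k)"
    using convolution[of k] less.prems T_nonneg unfolding D_def
    by (simp add: mult.left_commute mult_left_mono)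
  also have "\<dots> = F k * (\<Sum>i=0..k - 1. x k ^ i)"
    unfolding T_def sum_atLeast0_atMost_powers by (simp add: algebra_simps)
  finally show ?case .
qed

theorem mainTheorem14:
  fixes K :: nat and d :: "nat \<Rightarrow> real" and a b c :: real
  assumes "a > 0" and "b > 0" and "c > 0"
    and hyp: "\<And>k. k \<in> {1..K} \<Longrightarrow>
      d (k + 1) \<le> a / real k + b * (1 + ln (real k))
        + c * (\<Sum>l = 2..k. d l / (real k - real l + 2))"
  shows "\<And>k. k \<in> {1..K} \<Longrightarrow>
      d (k + 1) \<le> (a / real k + b * (1 + ln (real k)))
        * (\<Sum>i = 0..k - 1. (2 * c * (1 + ln (real k))) ^ i)"
proof (rule convolution_recursion_geometric_bound[OF hyp, where x = "\<lambda>k. 2 * c * (1 + ln (real k))"])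
  fix k :: nat assume "k \<ge> 1"
  then have "c * (\<Sum>l=2..k. (a / real (l - 1) + b * (1 + ln (real (l - 1)))) / (real k - real l + 2))
             \<le> c * (2 * (1 + ln (real k)) * (a / real k + b * (1 + ln (real k))))"
    using assms by (intro mult_left_mono harmonic_convolution_le) auto
  then show "c * (\<Sum>l=2..k. (a / real (l - 1) + b * (1 + ln (real (l - 1)))) / (real k - real l + 2))
             \<le> 2 * c * (1 + ln (real k)) * (a / real k + b * (1 + ln (real k)))"
    by (simp only: ac_simps)
qed (use assms in \<open>auto simp: mult_left_mono\<close>)

end
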